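(* Suppose the matrix $P$ satisfies simultaneously: (i) for all $n\in\mathbb N$ and all $c\in\{1,2,\dots,m_n\}$, $p_{c,n}\cdot p_{c-1,n}<0$; and (ii) the limits $\lim_{n\to\infty}\prod_{k=1}^{n}\frac{p_{0,k}}{q_{0,k}}$ and $\lim_{n\to\infty}\prod_{k=1}^{n}\frac{p_{m_k,k}}{q_{m_k,k}}$ are both different from $0$. Then $F$ has neither a finite nor an infinite derivative at any nega-$\tilde Q$-rational point of $[0,1]$.
   Context: Let $(m_n)_{n\ge1}$ be finite nonnegative integers and $\tilde Q=\|q_{i,n}\|$ ($i\in\{0,\dots,m_n\}$) with $q_{i,n}>0$, $\sum_{i}q_{i,n}=1$ for all $n$, and $\prod_n q_{i_n,n}=0$ for every digit sequence $(i_n)$. Put $a_{0,n}=0$, $a_{i,n}=\sum_{l<i}q_{l,n}$; $\Delta^{\tilde Q}_{j_1j_2\dots}=a_{j_1,1}+\sum_{n\ge2}a_{j_n,n}\prod_{l<n}q_{j_l,l}$. The nega-$\tilde Q$-representation $x=\Delta^{-\tilde Q}_{i_1i_2\dots}$ means $x=\Delta^{\tilde Q}_{i_1[m_2-i_2]i_3[m_4-i_4]\dots}$; every $x\in[0,1]$ has one. The nega-$\tilde Q$-rational points are the numbers $\Delta^{-\tilde Q}_{i_1\dots i_{n-1}i_nm_{n+1}0m_{n+3}0m_{n+5}\dots}=\Delta^{-\tilde Q}_{i_1\dots i_{n-1}[i_n-1]0m_{n+2}0m_{n+4}\dots}$ with $i_n\ne0$ (they have two representations). Let $P=\|p_{i,n}\|$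 have the same shape with $p_{i,n}\in(-1,1)$, $\sum_ip_{i,n}=1$, $\prod_n|p_{i_n,n}|=0$ for every digit sequence, $0<\sum_{i<c}p_{i,n}<1$ for $c\in\{1,\dots,m_n\}$. Put $\beta_{0,n}=0$, $\beta_{c,n}=\sum_{i<c}p_{i,n}$; for odd $n$: $\tilde p_{i,n}=p_{i,n}$, $\tilde\beta_{i,n}=\beta_{i,n}$; for even $n$: $\tilde p_{i,n}=p_{m_n-i,n}$, $\tilde\beta_{i,n}=\beta_{m_n-i,n}$. $F(x)=\beta_{i_1,1}+\sum_{k\ge2}\tilde\beta_{i_k,k}\prod_{j<k}\tilde p_{i_j,j}$ for $x=\Delta^{-\tilde Q}_{i_1i_2\dots}$ (independent of the representation); $F$ is the unique bounded solution on $[0,1]$ of the system $f(\hat\varphi^k(x))=\tilde\beta_{i_{k+1}(x),k+1}+\tilde p_{i_{k+1}(x),k+1}f(\hat\varphi^{k+1}(x))$, $k\ge0$, where $\hat\varphi$ is the shift of $\tilde Q$-digits. *)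

theory Defs
  imports "HOL-Analysis.Analysis"
begin

text \<open>Conventions: columns are indexed by n \<ge> 1 (values at n = 0 are ignored);
  the matrix entry q_{i,n} is written q i n; digits of column n lie in {0..m n}.\<close>

definition digit_seq :: "(nat \<Rightarrow> nat) \<Rightarrow> (nat \<Rightarrow> nat) \<Rightarrow> bool" where
  "digit_seq m d \<longleftrightarrow> (\<forall>n\<ge>1. d n \<le> m n)"

definition aQ :: "(nat \<Rightarrow> nat \<Rightarrow> real) \<Rightarrow> nat \<Rightarrow> nat \<Rightarrow> real" where
  "aQ q i n = (\<Sum>l<i. q l n)"

definition DeltaQ :: "(nat \<Rightarrow> nat \<Rightarrow> real) \<Rightarrow> (nat \<Rightarrow> nat) \<Rightarrow> real" where
  "DeltaQ q d = (\<Sum>k. aQ q (d (Suc k)) (Suc k) * (\<Prod>l=1..k. q (d l) l))"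

definition nega_digits :: "(nat \<Rightarrow> nat) \<Rightarrow> (nat \<Rightarrow> nat) \<Rightarrow> nat \<Rightarrow> nat" where
  "nega_digits m d n = (if even n then m n - d n else d n)"

definition nega_DeltaQ :: "(nat \<Rightarrow> nat) \<Rightarrow> (nat \<Rightarrow> nat \<Rightarrow> real) \<Rightarrow> (nat \<Rightarrow> nat) \<Rightarrow> real" where
  "nega_DeltaQ m q d = DeltaQ q (nega_digits m d)"

text \<open>Nega-Q-tilde-rational points: \<Delta>^{-Q}_{i_1...i_n m_{n+1} 0 m_{n+3} 0 ...}, i_n \<noteq> 0.\<close>
definition nega_rational_points :: "(nat \<Rightarrow> nat) \<Rightarrow> (nat \<Rightarrow> nat \<Rightarrow> real) \<Rightarrow> real set" where
  "nega_rational_points m q = {x. \<exists>d n. n \<ge> 1 \<and> digit_seq m d \<and> d n \<noteq> 0 \<and>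
      (\<forall>k>n. d k = (if odd (k - n) then m k else 0)) \<and> x = nega_DeltaQ m q d}"

definition betaP :: "(nat \<Rightarrow> nat \<Rightarrow> real) \<Rightarrow> nat \<Rightarrow> nat \<Rightarrow> real" where
  "betaP p c n = (\<Sum>i<c. p i n)"

definition tilde_p :: "(nat \<Rightarrow> nat) \<Rightarrow> (nat \<Rightarrow> nat \<Rightarrow> real) \<Rightarrow> nat \<Rightarrow> nat \<Rightarrow> real" where
  "tilde_p m p i n = (if odd n then p i n else p (m n - i) n)"

definition tilde_beta :: "(nat \<Rightarrow> nat) \<Rightarrow> (nat \<Rightarrow> nat \<Rightarrow> real) \<Rightarrow> nat \<Rightarrow> nat \<Rightarrow> real" where
  "tilde_beta m p i n = (if odd n then betaP p i n else betaP p (m n - i) n)"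

text \<open>The function F, evaluated through a (chosen) nega-Q-tilde representation of x;
  by the context it does not depend on the choice of representation.\<close>
definition F_series :: "(nat \<Rightarrow> nat) \<Rightarrow> (nat \<Rightarrow> nat \<Rightarrow> real) \<Rightarrow> (nat \<Rightarrow> nat) \<Rightarrow> real" where
  "F_series m p d = (\<Sum>k. tilde_beta m p (d (Suc k)) (Suc k) * (\<Prod>j=1..k. tilde_p m p (d j) j))"

definition FF :: "(nat \<Rightarrow> nat) \<Rightarrow> (nat \<Rightarrow> nat \<Rightarrow> real) \<Rightarrow> (nat \<Rightarrow> nat \<Rightarrow> real) \<Rightarrow> real \<Rightarrow> real" where
  "FF m q p x = F_series m p (SOME d. digit_seq m d \<and> nega_DeltaQ m q d = x)"

definition has_infinite_derivative :: "(real \<Rightarrow> real) \<Rightarrow> real \<Rightarrow> real set \<Rightarrow> bool" where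
  "has_infinite_derivative f x S \<longleftrightarrow>
     filterlim (\<lambda>y. (f y - f x) / (y - x)) at_top (at x within S) \<or>
     filterlim (\<lambda>y. (f y - f x) / (y - x)) at_bot (at x within S)"

end

theory Submission
  imports Defs
begin

text \<open>For every \<open>Q\<close>-expansion \<open>c\<close> one has \<open>F(\<Delta>\<^sup>Q\<^sub>c) = \<Delta>\<^sup>P\<^sub>c\<close>: two
  \<open>Q\<close>-expansions of the same point are the two expansions of a \<open>Q\<close>-rational point, and these
  have the same \<open>P\<close>-value. A nega-\<open>Q\<close>-rational point \<open>x\<close> has the \<open>Q\<close>-expansions
  \<open>c\<^sub>1\<dots>c\<^sub>N\<^sub>-\<^sub>1 E 0 0\<dots>\<close> and \<open>c\<^sub>1\<dots>c\<^sub>N\<^sub>-\<^sub>1 (E-1) m m\<dots>\<close>.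
  Replacing the zeros of the first one after position \<open>N+k\<close> by maximal digits gives points
  \<open>y\<^sub>k > x\<close>, replacing the maximal digits of the second one after \<open>N+k\<close> by zeros gives
  \<open>z\<^sub>k < x\<close>, and in both cases the difference quotient of \<open>F\<close> is the product of the
  ratios \<open>p/q\<close> along the first \<open>N+k\<close> digits. By (ii) both sequences of quotients converge to
  nonzero limits carrying the signs of the products up to \<open>N\<close>; by (i) these signs are opposite,
  since the two expansions differ only in the \<open>N\<close>-th factor, \<open>p\<^sub>E\<^sub>,\<^sub>N\<close> versus
  \<open>p\<^sub>E\<^sub>-\<^sub>1\<^sub>,\<^sub>N\<close>. Two different finite limits of the difference quotient along
  sequences tending to \<open>x\<close> rule out a finite as well as an infinite derivative.\<close>

section \<open>Products of matrix entries along digit sequences\<close>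

definition digit_prod :: "(nat \<Rightarrow> nat \<Rightarrow> real) \<Rightarrow> (nat \<Rightarrow> nat) \<Rightarrow> nat \<Rightarrow> nat \<Rightarrow> real" where
  "digit_prod f c i j = (\<Prod>l\<in>{i<..j}. f (c l) l)"

lemma digit_prod_same [simp]: "digit_prod f c i i = 1"
  by (simp add: digit_prod_def)

lemma digit_prod_Suc:
  "i \<le> j \<Longrightarrow> digit_prod f c i (Suc j) = digit_prod f c i j * f (c (Suc j)) (Suc j)"
proof -
  assume "i \<le> j"
  then have "{i<..Suc j} = insert (Suc j) {i<..j}" by auto
  then show ?thesis by (simp add: digit_prod_def mult.commute)
qed

lemma digit_prod_split:
  "i \<le> j \<Longrightarrow> j \<le> k \<Longrightarrow> digit_prod f c i k = digit_prod f c i j * digit_prod f c j k"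
proof -
  assume "i \<le> j" "j \<le> k"
  then have "{i<..k} = {i<..j} \<union> {j<..k}" by auto
  then show ?thesis unfolding digit_prod_def by (simp add: prod.union_disjoint ivl_disj_int)
qed

lemma digit_prod_head:
  "digit_prod f c J (J + Suc k) = f (c (J+1)) (J+1) * digit_prod f c (J+1) (J+1+k)"
  using digit_prod_split[of J "J+1" "J+1+k" f c] digit_prod_Suc[of J J f c] by simp

lemma digit_prod_cong:
  "(\<And>l. i < l \<Longrightarrow> l \<le> j \<Longrightarrow> c l = c' l) \<Longrightarrow> digit_prod f c i j = digit_prod f c' i j"
  unfolding digit_prod_def by (rule prod.cong) auto

lemma digit_prod_from_0: "digit_prod f c 0 N = (\<Prod>k=1..N. f (c k) k)"
proof -
  have "{0<..N} = {1..N}" by auto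
  then show ?thesis by (simp add: digit_prod_def)
qed

lemma digit_prod_divide:
  "digit_prod (\<lambda>i n. f i n / g i n) c i j = digit_prod f c i j / digit_prod g c i j"
  unfolding digit_prod_def by (rule prod_dividef)

lemma digit_prod_pos: "(\<And>l. l \<ge> 1 \<Longrightarrow> f (c l) l > 0) \<Longrightarrow> digit_prod f c i j > 0"
  unfolding digit_prod_def by (intro prod_pos) auto

lemma digit_prod_nonzero: "(\<And>l. l \<ge> 1 \<Longrightarrow> f (c l) l \<noteq> 0) \<Longrightarrow> digit_prod f c i j \<noteq> 0"
  unfolding digit_prod_def by (subst prod_zero_iff) auto

lemma digit_prod_mult_common_prefix:
  assumes "\<And>l. 1 \<le> l \<Longrightarrow> l \<le> J \<Longrightarrow> c l = c' l"
  shows "digit_prod f c 0 (Suc J) * digit_prod f c' 0 (Suc J)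
    = (digit_prod f c 0 J)\<^sup>2 * (f (c (Suc J)) (Suc J) * f (c' (Suc J)) (Suc J))"
  using digit_prod_Suc[of 0 J f c] digit_prod_Suc[of 0 J f c'] digit_prod_cong[of 0 J c c' f] assms
  by (simp add: power2_eq_square)

section \<open>Expansions with respect to a matrix\<close>

definition expansion_matrix :: "(nat \<Rightarrow> nat) \<Rightarrow> (nat \<Rightarrow> nat \<Rightarrow> real) \<Rightarrow> bool" where
  "expansion_matrix m f \<longleftrightarrow>
     (\<forall>n\<ge>1. \<forall>c\<le>Suc (m n). 0 \<le> aQ f c n \<and> aQ f c n \<le> 1) \<and> (\<forall>n\<ge>1. aQ f (Suc (m n)) n = 1) \<and>
     (\<forall>n\<ge>1. \<forall>i\<le>m n. f i n \<noteq> 0) \<and> (\<forall>d. digit_seq m d \<longrightarrow> (\<lambda>N. digit_prod f d 0 N) \<longlonglongrightarrow> 0)"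

lemma aQ_Suc: "aQ f (Suc c) n = aQ f c n + f c n"
  by (simp add: aQ_def)

lemma aQ_0 [simp]: "aQ f 0 n = 0"
  by (simp add: aQ_def)

lemma aQ_Suc_eq_sum: "aQ f (Suc k) n = (\<Sum>i\<le>k. f i n)"
  unfolding aQ_def by (simp add: lessThan_Suc_atMost)

lemma expansion_matrixI:
  assumes sum: "\<And>n. n \<ge> 1 \<Longrightarrow> (\<Sum>i\<le>m n. f i n) = 1"
    and partial: "\<And>n c. n \<ge> 1 \<Longrightarrow> 1 \<le> c \<Longrightarrow> c \<le> m n \<Longrightarrow> 0 \<le> aQ f c n \<and> aQ f c n \<le> 1"
    and nonzero: "\<And>n i. n \<ge> 1 \<Longrightarrow> i \<le> m n \<Longrightarrow> f i n \<noteq> 0"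
    and prod: "\<And>d. digit_seq m d \<Longrightarrow> (\<lambda>N. \<Prod>k=1..N. \<bar>f (d k) k\<bar>) \<longlonglongrightarrow> 0"
  shows "expansion_matrix m f"
  unfolding expansion_matrix_def
proof (intro conjI allI impI)
  fix n c assume n: "n \<ge> 1" and c: "c \<le> Suc (m n)"
  then consider "c = 0" | "c = Suc (m n)" | "1 \<le> c" "c \<le> m n" by linarith
  then have "0 \<le> aQ f c n \<and> aQ f c n \<le> 1"
    by cases (use partial[OF n] sum[OF n] aQ_Suc_eq_sum[of f "m n" n] in auto)
  then show "0 \<le> aQ f c n" "aQ f c n \<le> 1" by auto
next
  fix n :: nat assume "n \<ge> 1" then show "aQ f (Suc (m n)) n = 1" using sum aQ_Suc_eq_sum by simp
next
  fix d assume "digit_seq m d"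
  then have "(\<lambda>N. \<bar>digit_prod f d 0 N\<bar>) \<longlonglongrightarrow> 0"
    unfolding digit_prod_from_0 abs_prod by (rule prod)
  then show "(\<lambda>N. digit_prod f d 0 N) \<longlonglongrightarrow> 0" by (rule tendsto_rabs_zero_cancel)
qed (use nonzero in auto)

lemma expansion_matrixD:
  assumes "expansion_matrix m f"
  shows "\<And>n c. n \<ge> 1 \<Longrightarrow> c \<le> Suc (m n) \<Longrightarrow> 0 \<le> aQ f c n"
    and "\<And>n c. n \<ge> 1 \<Longrightarrow> c \<le> Suc (m n) \<Longrightarrow> aQ f c n \<le> 1"
    and "\<And>n. n \<ge> 1 \<Longrightarrow> aQ f (Suc (m n)) n = 1"
    and "\<And>n i. n \<ge> 1 \<Longrightarrow> i \<le> m n \<Longrightarrow> f i n \<noteq> 0"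
    and "\<And>d. digit_seq m d \<Longrightarrow> (\<lambda>N. digit_prod f d 0 N) \<longlonglongrightarrow> 0"
  using assms unfolding expansion_matrix_def by auto

lemma digit_seqD: "digit_seq m c \<Longrightarrow> n \<ge> 1 \<Longrightarrow> c n \<le> m n"
  unfolding digit_seq_def by auto

lemma expansion_matrix_positive:
  assumes pos: "\<And>n i. n \<ge> 1 \<Longrightarrow> i \<le> m n \<Longrightarrow> q i n > 0"
    and sum: "\<And>n. n \<ge> 1 \<Longrightarrow> (\<Sum>i\<le>m n. q i n) = 1"
    and prod: "\<And>d. digit_seq m d \<Longrightarrow> (\<lambda>N. \<Prod>k=1..N. q (d k) k) \<longlonglongrightarrow> 0"
  shows "expansion_matrix m q"
proof (rule expansion_matrixI[OF sum])
  fix n c assume n: "n \<ge> 1" and c: "1 \<le> c" "c \<le> m n"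
  have "aQ q c n \<le> aQ q (Suc (m n)) n"
    unfolding aQ_def by (rule sum_mono2) (use c pos[OF n] in \<open>auto intro: less_imp_le\<close>)
  moreover have "0 \<le> aQ q c n"
    unfolding aQ_def by (rule sum_nonneg) (use c pos[OF n] in \<open>auto intro: less_imp_le\<close>)
  ultimately show "0 \<le> aQ q c n \<and> aQ q c n \<le> 1" using sum[OF n] aQ_Suc_eq_sum[of q "m n" n] by simp
next
  fix d assume d: "digit_seq m d"
  have "(\<Prod>k=1..N. \<bar>q (d k) k\<bar>) = (\<Prod>k=1..N. q (d k) k)" for N
    by (rule prod.cong) (auto intro!: abs_of_pos pos digit_seqD[OF d])
  then show "(\<lambda>N. \<Prod>k=1..N. \<bar>q (d k) k\<bar>) \<longlonglongrightarrow> 0" using prod[OF d] by simp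
qed (use pos in fastforce)+

lemma first_and_last_pos:
  fixes f :: "nat \<Rightarrow> real"
  assumes sum: "(\<Sum>i\<le>M. f i) = 1" and partial: "\<And>c. 1 \<le> c \<Longrightarrow> c \<le> M \<Longrightarrow> 0 < (\<Sum>i<c. f i) \<and> (\<Sum>i<c. f i) < 1"
  shows "f 0 > 0" "f M > 0"
proof -
  have split: "(\<Sum>i\<le>M. f i) = (\<Sum>i<M. f i) + f M" by (simp add: lessThan_Suc_atMost[symmetric])
  show "f 0 > 0" using sum partial[of 1] by (cases "M = 0") auto
  show "f M > 0" using sum split partial[of M] by (cases "M = 0") auto
qed

definition tail_term :: "(nat \<Rightarrow> nat \<Rightarrow> real) \<Rightarrow> (nat \<Rightarrow> nat) \<Rightarrow> nat \<Rightarrow> nat \<Rightarrow> real" where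
  "tail_term f c J k = aQ f (c (J+k+1)) (J+k+1) * digit_prod f c J (J+k)"

definition tail_value :: "(nat \<Rightarrow> nat \<Rightarrow> real) \<Rightarrow> (nat \<Rightarrow> nat) \<Rightarrow> nat \<Rightarrow> real" where
  "tail_value f c J = suminf (tail_term f c J)"

lemma DeltaQ_eq_tail_value: "DeltaQ f c = tail_value f c 0"
  unfolding DeltaQ_def tail_value_def tail_term_def digit_prod_from_0 by simp

lemma DeltaQ_cong: "(\<And>k. k \<ge> 1 \<Longrightarrow> c k = c' k) \<Longrightarrow> DeltaQ f c = DeltaQ f c'"
  unfolding DeltaQ_def
  by (intro arg_cong[where f=suminf] ext arg_cong2[where f="(*)"] prod.cong) auto

lemma tail_term_0: "tail_term f c J 0 = aQ f (c (J+1)) (J+1)"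
  by (simp add: tail_term_def)

lemma tail_term_Suc: "tail_term f c J (Suc k) = f (c (J+1)) (J+1) * tail_term f c (J+1) k"
  unfolding tail_term_def using digit_prod_head[of f c J k] by (simp add: algebra_simps)

lemma tail_term_shift: "tail_term f c J (K+k) = digit_prod f c J (J+K) * tail_term f c (J+K) k"
  unfolding tail_term_def using digit_prod_split[of J "J+K" "J+(K+k)" f c]
  by (simp add: algebra_simps)

lemma tail_partial_sum_bounds:
  assumes f: "expansion_matrix m f" and c: "digit_seq m c"
  shows "0 \<le> (\<Sum>k<M. tail_term f c J k) \<and> (\<Sum>k<M. tail_term f c J k) \<le> 1"
proof (induction M arbitrary: J)
  case 0 then show ?case by simp
next
  case (Suc M)
  define R where "R = (\<Sum>k<M. tail_term f c (J+1) k)"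
  define a where "a = aQ f (c (J+1)) (J+1)"
  define b where "b = aQ f (Suc (c (J+1))) (J+1)"
  have cJ: "c (J+1) \<le> m (J+1)" using digit_seqD[OF c] by simp
  have a: "0 \<le> a" "a \<le> 1" and b: "0 \<le> b" "b \<le> 1"
    unfolding a_def b_def using expansion_matrixD(1,2)[OF f, of "J+1"] cJ by auto
  have R: "0 \<le> R" "R \<le> 1" using Suc.IH[of "J+1"] unfolding R_def by auto
  have "(\<Sum>k<Suc M. tail_term f c J k) = (1 - R) * a + R * b"
    unfolding sum.lessThan_Suc_shift tail_term_Suc tail_term_0 sum_distrib_left[symmetric]
      R_def[symmetric] a_def b_def aQ_Suc by (simp add: algebra_simps)
  moreover have "(1 - R) * a \<le> 1 - R" "R * b \<le> R"
    using mult_left_mono[OF a(2), of "1 - R"] mult_left_mono[OF b(2), of R] R by auto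
  ultimately show ?case using a b R by simp
qed

lemma digit_prod_tail_tendsto_0:
  assumes f: "expansion_matrix m f" and c: "digit_seq m c"
  shows "(\<lambda>N. digit_prod f c J (J+N)) \<longlonglongrightarrow> 0"
proof -
  have nz: "digit_prod f c 0 J \<noteq> 0"
    by (rule digit_prod_nonzero) (use expansion_matrixD(4)[OF f] digit_seqD[OF c] in auto)
  have "(\<lambda>N. digit_prod f c 0 (N+J) / digit_prod f c 0 J) \<longlonglongrightarrow> 0 / digit_prod f c 0 J"
    using LIMSEQ_ignore_initial_segment[OF expansion_matrixD(5)[OF f c], of J]
    by (intro tendsto_divide tendsto_const nz)
  moreover have "digit_prod f c 0 (N+J) / digit_prod f c 0 J = digit_prod f c J (J+N)" for N
    using digit_prod_split[of 0 J "J+N" f c] nz by (simp add: add.commute)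
  ultimately show ?thesis by simp
qed

lemma summable_tail_term:
  assumes f: "expansion_matrix m f" and c: "digit_seq m c"
  shows "summable (tail_term f c J)"
proof (rule summable_Cauchy'[where g = "\<lambda>K. \<bar>digit_prod f c J (J+K)\<bar>"])
  show "(\<lambda>K. \<bar>digit_prod f c J (J+K)\<bar>) \<longlonglongrightarrow> 0"
    using digit_prod_tail_tendsto_0[OF f c] tendsto_rabs_zero by blast
  show "\<forall>\<^sub>F K in sequentially. \<forall>n\<ge>K. norm (sum (tail_term f c J) {K..<n}) \<le> \<bar>digit_prod f c J (J+K)\<bar>"
  proof (intro always_eventually allI impI)
    fix K n :: nat assume "K \<le> n"
    then obtain M where n: "n = K + M" using le_Suc_ex by blast
    have "sum (tail_term f c J) {K..<n} = (\<Sum>k<M. tail_term f c J (K+k))"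
      unfolding n by (induction M) auto
    also have "\<dots> = digit_prod f c J (J+K) * (\<Sum>k<M. tail_term f c (J+K) k)"
      by (simp add: tail_term_shift sum_distrib_left)
    finally show "norm (sum (tail_term f c J) {K..<n}) \<le> \<bar>digit_prod f c J (J+K)\<bar>"
      using tail_partial_sum_bounds[OF f c, where M = M and J = "J+K"] by (simp add: abs_mult mult_left_le)
  qed
qed

lemma tail_value_rec:
  assumes f: "expansion_matrix m f" and c: "digit_seq m c"
  shows "tail_value f c J = aQ f (c (J+1)) (J+1) + f (c (J+1)) (J+1) * tail_value f c (J+1)"
proof -
  have "(\<Sum>k. tail_term f c J (Suc k)) = tail_value f c J - tail_term f c J 0"
    unfolding tail_value_def by (rule suminf_split_head[OF summable_tail_term[OF f c]])
  moreover have "(\<Sum>k. tail_term f c J (Suc k)) = f (c (J+1)) (J+1) * tail_value f c (J+1)"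
    unfolding tail_term_Suc tail_value_def using suminf_mult[OF summable_tail_term[OF f c]] by simp
  ultimately show ?thesis by (simp add: tail_term_0)
qed

lemma tail_value_bounds:
  assumes f: "expansion_matrix m f" and c: "digit_seq m c"
  shows "0 \<le> tail_value f c J" "tail_value f c J \<le> 1"
proof -
  have lim: "(\<lambda>M. \<Sum>k<M. tail_term f c J k) \<longlonglongrightarrow> tail_value f c J"
    unfolding tail_value_def by (rule summable_LIMSEQ[OF summable_tail_term[OF f c]])
  show "0 \<le> tail_value f c J"
    by (rule LIMSEQ_le_const[OF lim]) (use tail_partial_sum_bounds[OF f c] in auto)
  show "tail_value f c J \<le> 1"
    by (rule LIMSEQ_le_const2[OF lim]) (use tail_partial_sum_bounds[OF f c] in auto)
qed

lemma DeltaQ_bounds: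
  "expansion_matrix m f \<Longrightarrow> digit_seq m c \<Longrightarrow> DeltaQ f c \<in> {0..1}"
  using tail_value_bounds by (simp add: DeltaQ_eq_tail_value)

lemma DeltaQ_diff_common_prefix:
  assumes f: "expansion_matrix m f" and c: "digit_seq m c" and c': "digit_seq m c'"
    and agree: "\<And>l. 1 \<le> l \<Longrightarrow> l \<le> J \<Longrightarrow> c l = c' l"
  shows "DeltaQ f c - DeltaQ f c' = digit_prod f c 0 J * (tail_value f c J - tail_value f c' J)"
  using agree
proof (induction J)
  case 0 then show ?case by (simp add: DeltaQ_eq_tail_value)
next
  case (Suc J)
  have "c (J+1) = c' (J+1)" using Suc.prems by auto
  then have "tail_value f c J - tail_value f c' J =
      f (c (J+1)) (J+1) * (tail_value f c (J+1) - tail_value f c' (J+1))"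
    using tail_value_rec[OF f c, of J] tail_value_rec[OF f c', of J] by (simp add: algebra_simps)
  then show ?case using Suc digit_prod_Suc[of 0 J f c] by (simp add: mult.assoc)
qed

lemma tail_value_zero_digits:
  assumes "\<And>l. l > J \<Longrightarrow> c l = 0"
  shows "tail_value f c J = 0"
proof -
  have "tail_term f c J = (\<lambda>k. 0)" using assms by (auto simp: tail_term_def fun_eq_iff)
  then show ?thesis unfolding tail_value_def by simp
qed

lemma tail_value_max_digits:
  assumes f: "expansion_matrix m f" and c: "digit_seq m c" and max: "\<And>l. l > J \<Longrightarrow> c l = m l"
  shows "tail_value f c J = 1"
proof -
  have partial: "(\<Sum>k<M. tail_term f c J k) = 1 - digit_prod f c J (J+M)" for M
  proof (induction M)
    case (Suc M)
    have a: "aQ f (c (Suc (J+M))) (Suc (J+M)) = 1 - f (c (Suc (J+M))) (Suc (J+M))"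
      using expansion_matrixD(3)[OF f, of "Suc (J+M)"] max[of "Suc (J+M)"] by (simp add: aQ_Suc)
    have "(\<Sum>k<Suc M. tail_term f c J k) = 1 - digit_prod f c J (J+M) * f (c (Suc (J+M))) (Suc (J+M))"
      using Suc by (simp add: tail_term_def a algebra_simps)
    then show ?case using digit_prod_Suc[of J "J+M" f c] by simp
  qed simp
  have "(\<lambda>M. \<Sum>k<M. tail_term f c J k) \<longlonglongrightarrow> 1 - 0"
    unfolding partial by (intro tendsto_diff tendsto_const digit_prod_tail_tendsto_0[OF f c])
  then show ?thesis
    unfolding tail_value_def using summable_LIMSEQ[OF summable_tail_term[OF f c]] LIMSEQ_unique
    by fastforce
qed

lemma DeltaQ_raise_zero_tail:
  assumes f: "expansion_matrix m f" and e: "digit_seq m e" and zeros: "\<And>l. l > K \<Longrightarrow> e l = 0"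
  shows "DeltaQ f (\<lambda>j. if j \<le> K then e j else m j) - DeltaQ f e = digit_prod f e 0 K"
proof -
  define e' where "e' = (\<lambda>j. if j \<le> K then e j else m j)"
  have e': "digit_seq m e'" using e unfolding e'_def digit_seq_def by auto
  have "DeltaQ f e' - DeltaQ f e = digit_prod f e' 0 K * (tail_value f e' K - tail_value f e K)"
    by (rule DeltaQ_diff_common_prefix[OF f e' e]) (simp add: e'_def)
  moreover have "tail_value f e' K = 1"
    by (rule tail_value_max_digits[OF f e']) (simp add: e'_def)
  moreover have "tail_value f e K = 0" by (rule tail_value_zero_digits) (simp add: zeros)
  moreover have "digit_prod f e' 0 K = digit_prod f e 0 K"
    by (rule digit_prod_cong) (simp add: e'_def)
  ultimately show ?thesis unfolding e'_def by simp
qed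

lemma DeltaQ_lower_max_tail:
  assumes f: "expansion_matrix m f" and e: "digit_seq m e" and max: "\<And>l. l > K \<Longrightarrow> e l = m l"
  shows "DeltaQ f e - DeltaQ f (\<lambda>j. if j \<le> K then e j else 0) = digit_prod f e 0 K"
proof -
  define e' where "e' = (\<lambda>j. if j \<le> K then e j else 0)"
  have e': "digit_seq m e'" using e unfolding e'_def digit_seq_def by auto
  have "DeltaQ f e - DeltaQ f e' = digit_prod f e 0 K * (tail_value f e K - tail_value f e' K)"
    by (rule DeltaQ_diff_common_prefix[OF f e e']) (simp add: e'_def)
  moreover have "tail_value f e K = 1" by (rule tail_value_max_digits[OF f e max])
  moreover have "tail_value f e' K = 0" by (rule tail_value_zero_digits) (simp add: e'_def)
  ultimately show ?thesis unfolding e'_def by simp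
qed

definition zeros_after :: "(nat \<Rightarrow> nat) \<Rightarrow> nat \<Rightarrow> nat \<Rightarrow> nat \<Rightarrow> nat" where
  "zeros_after c N E j = (if j < N then c j else if j = N then E else 0)"

definition maxima_after :: "(nat \<Rightarrow> nat) \<Rightarrow> (nat \<Rightarrow> nat) \<Rightarrow> nat \<Rightarrow> nat \<Rightarrow> nat \<Rightarrow> nat" where
  "maxima_after m c N E j = (if j < N then c j else if j = N then E - 1 else m j)"
  \<comment> \<open>only meaningful for \<open>E \<ge> 1\<close>: the subtraction truncates at \<open>0\<close>\<close>

lemma digit_seq_zeros_after: "digit_seq m c \<Longrightarrow> E \<le> m N \<Longrightarrow> digit_seq m (zeros_after c N E)"
  unfolding digit_seq_def zeros_after_def by auto

lemma digit_seq_maxima_after: "digit_seq m c \<Longrightarrow> E \<le> m N \<Longrightarrow> digit_seq m (maxima_after m c N E)"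
  unfolding digit_seq_def maxima_after_def by auto

lemma DeltaQ_zeros_after_eq_maxima_after:
  assumes f: "expansion_matrix m f" and c: "digit_seq m c" and N: "N \<ge> 1" and E: "1 \<le> E" "E \<le> m N"
  shows "DeltaQ f (zeros_after c N E) = DeltaQ f (maxima_after m c N E)"
proof -
  define e where "e = zeros_after c N E"
  define e' where "e' = maxima_after m c N E"
  have e: "digit_seq m e" and e': "digit_seq m e'"
    unfolding e_def e'_def using digit_seq_zeros_after digit_seq_maxima_after c E by auto
  obtain J where NJ: "N = Suc J" using N not0_implies_Suc by fastforce
  have "tail_value f e J = aQ f E N"
    using tail_value_rec[OF f e, of J] tail_value_zero_digits[of N e f]
    by (simp add: e_def zeros_after_def NJ)
  also have "\<dots> = aQ f (E - 1) N + f (E - 1) N" using aQ_Suc[of f "E - 1" N] E by simp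
  also have "\<dots> = tail_value f e' J"
    using tail_value_rec[OF f e', of J] tail_value_max_digits[OF f e', of N]
    by (simp add: e'_def maxima_after_def NJ)
  finally have "tail_value f e J = tail_value f e' J" .
  then show ?thesis
    using DeltaQ_diff_common_prefix[OF f e e', of J]
    unfolding e_def e'_def zeros_after_def maxima_after_def NJ by simp
qed

section \<open>Coinciding expansions for a positive matrix\<close>

lemma propagate_after:
  assumes step: "\<And>j. P j \<Longrightarrow> Q (Suc j) \<and> P (Suc j)" and start: "P J" and l: "l > J"
  shows "Q l"
proof -
  obtain l' where l': "l = Suc l'" "J \<le> l'" using l by (cases l) auto
  have "P l'" using l'(2) by (induction rule: dec_induct) (use start step in auto)
  then show ?thesis using step l'(1) by blast
qed

locale positive_expansion =
  fixes m :: "nat \<Rightarrow> nat" and q :: "nat \<Rightarrow> nat \<Rightarrow> real"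
  assumes expansion: "expansion_matrix m q"
    and pos: "\<And>n i. n \<ge> 1 \<Longrightarrow> i \<le> m n \<Longrightarrow> q i n > 0"
begin

lemma aQ_strict_mono:
  assumes n: "n \<ge> 1" and cc': "c < c'" "c' \<le> Suc (m n)"
  shows "aQ q c n < aQ q c' n"
proof -
  have "aQ q c' n = aQ q c n + (\<Sum>i\<in>{c..<c'}. q i n)"
    unfolding aQ_def using cc' by (simp add: sum.atLeastLessThan_concat[symmetric] atLeast0LessThan[symmetric])
  moreover have "q c n \<le> (\<Sum>i\<in>{c..<c'}. q i n)"
    by (rule member_le_sum) (use cc' pos[OF n] in \<open>auto intro: less_imp_le\<close>)
  ultimately show ?thesis using pos[OF n, of c] cc' by simp
qed

lemma digit_prod_q_pos: "digit_seq m c \<Longrightarrow> digit_prod q c i j > 0"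
  by (rule digit_prod_pos) (metis pos digit_seqD)

lemma tail_value_eq_0_step:
  assumes c: "digit_seq m c" and zero: "tail_value q c J = 0"
  shows "c (Suc J) = 0 \<and> tail_value q c (Suc J) = 0"
proof -
  have cJ: "c (Suc J) \<le> m (Suc J)" using digit_seqD[OF c] by simp
  have "0 \<le> aQ q (c (Suc J)) (Suc J)" "0 < q (c (Suc J)) (Suc J)" "0 \<le> tail_value q c (Suc J)"
    using expansion_matrixD(1)[OF expansion, of "Suc J"] pos cJ tail_value_bounds[OF expansion c]
    by auto
  moreover have "aQ q (c (Suc J)) (Suc J) + q (c (Suc J)) (Suc J) * tail_value q c (Suc J) = 0"
    using tail_value_rec[OF expansion c, of J] zero by simp
  ultimately have "aQ q (c (Suc J)) (Suc J) = 0" "tail_value q c (Suc J) = 0"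
    by (smt (verit) mult_nonneg_nonneg mult_pos_pos)+
  moreover have "0 < c (Suc J) \<Longrightarrow> 0 < aQ q (c (Suc J)) (Suc J)"
    using aQ_strict_mono[of "Suc J" 0 "c (Suc J)"] cJ by simp
  ultimately show ?thesis by auto
qed

lemma tail_value_eq_1_step:
  assumes c: "digit_seq m c" and one: "tail_value q c J = 1"
  shows "c (Suc J) = m (Suc J) \<and> tail_value q c (Suc J) = 1"
proof -
  define a where "a = aQ q (c (Suc J)) (Suc J)"
  define r where "r = q (c (Suc J)) (Suc J)"
  define t where "t = tail_value q c (Suc J)"
  have cJ: "c (Suc J) \<le> m (Suc J)" using digit_seqD[OF c] by simp
  have r: "0 < r" and t: "t \<le> 1"
    unfolding r_def t_def using pos cJ tail_value_bounds[OF expansion c] by auto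
  have rec: "a + r * t = 1" using tail_value_rec[OF expansion c, of J] one by (simp add: a_def r_def t_def)
  moreover have "r * t \<le> r" using mult_left_mono[OF t, of r] r by simp
  ultimately have "1 \<le> a + r" by linarith
  then have "c (Suc J) = m (Suc J)"
    using aQ_strict_mono[of "Suc J" "Suc (c (Suc J))" "Suc (m (Suc J))"] cJ
      expansion_matrixD(3)[OF expansion, of "Suc J"]
    by (force simp: a_def r_def aQ_Suc)
  moreover have "a + r = 1"
    using expansion_matrixD(3)[OF expansion, of "Suc J"] calculation by (simp add: a_def r_def aQ_Suc)
  then have "r * t = r" using rec by linarith
  then have "t = 1" using r by simp
  ultimately show ?thesis by (simp add: t_def)
qed

lemma tail_value_eq_0_imp_zero_digits:
  "digit_seq m c \<Longrightarrow> tail_value q c J = 0 \<Longrightarrow> l > J \<Longrightarrow> c l = 0"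
  using propagate_after[where P = "\<lambda>j. tail_value q c j = 0" and Q = "\<lambda>j. c j = 0"]
    tail_value_eq_0_step by blast

lemma tail_value_eq_1_imp_max_digits:
  "digit_seq m c \<Longrightarrow> tail_value q c J = 1 \<Longrightarrow> l > J \<Longrightarrow> c l = m l"
  using propagate_after[where P = "\<lambda>j. tail_value q c j = 1" and Q = "\<lambda>j. c j = m j"]
    tail_value_eq_1_step by blast

lemma tail_value_eq_first_difference:
  assumes c: "digit_seq m c" and c': "digit_seq m c'"
    and eq: "tail_value q c J = tail_value q c' J" and lt: "c (Suc J) < c' (Suc J)"
  shows "c' (Suc J) = Suc (c (Suc J)) \<and> tail_value q c (Suc J) = 1 \<and> tail_value q c' (Suc J) = 0"
proof -
  define a where "a = aQ q (c (Suc J)) (Suc J)"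
  define a' where "a' = aQ q (c' (Suc J)) (Suc J)"
  define r where "r = q (c (Suc J)) (Suc J)"
  define r' where "r' = q (c' (Suc J)) (Suc J)"
  define t where "t = tail_value q c (Suc J)"
  define t' where "t' = tail_value q c' (Suc J)"
  have c'J: "c' (Suc J) \<le> m (Suc J)" using digit_seqD[OF c'] by simp
  have r: "r > 0" "r' > 0" unfolding r_def r'_def using pos c'J lt by auto
  have t: "0 \<le> t" "t \<le> 1" "0 \<le> t'" "t' \<le> 1"
    unfolding t_def t'_def using tail_value_bounds[OF expansion c] tail_value_bounds[OF expansion c']
    by auto
  have rec: "a + r * t = a' + r' * t'"
    using eq tail_value_rec[OF expansion c, of J] tail_value_rec[OF expansion c', of J]
    by (simp add: a_def a'_def r_def r'_def t_def t'_def)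
  have gap_strict: "c' (Suc J) \<noteq> Suc (c (Suc J)) \<Longrightarrow> a + r < a'"
    unfolding a_def a'_def r_def aQ_Suc[symmetric]
    using aQ_strict_mono[of "Suc J" "Suc (c (Suc J))" "c' (Suc J)"] lt c'J by simp
  have gap: "a + r \<le> a'"
    using gap_strict by (cases "c' (Suc J) = Suc (c (Suc J))") (auto simp: a_def a'_def r_def aQ_Suc)
  have "r * t \<le> r" "0 \<le> r' * t'" using mult_left_mono[OF t(2), of r] r t by auto
  \<comment> \<open>both sides of \<open>rec\<close> range over abutting intervals, so they can only meet at the endpoint\<close>
  then have "r * t = r" "a + r = a'" "r' * t' = 0" using rec gap by linarith+
  then show ?thesis using r gap_strict by (auto simp: t_def t'_def)
qed

lemma DeltaQ_transfer_at_first_difference: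
  assumes p: "expansion_matrix m p" and c: "digit_seq m c" and c': "digit_seq m c'"
    and eq: "DeltaQ q c = DeltaQ q c'" and agree: "\<And>l. 1 \<le> l \<Longrightarrow> l \<le> J \<Longrightarrow> c l = c' l"
    and lt: "c (Suc J) < c' (Suc J)"
  shows "DeltaQ p c = DeltaQ p c'"
proof -
  define E where "E = c' (Suc J)"
  have "digit_prod q c 0 J * (tail_value q c J - tail_value q c' J) = 0"
    using DeltaQ_diff_common_prefix[OF expansion c c' agree] eq by simp
  then have "tail_value q c J = tail_value q c' J" using digit_prod_q_pos[OF c, of 0 J] by simp
  then have E: "E = Suc (c (Suc J))" and one: "tail_value q c (Suc J) = 1"
    and zero: "tail_value q c' (Suc J) = 0"
    using tail_value_eq_first_difference[OF c c' _ lt] by (auto simp: E_def)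
  have E_le: "E \<le> m (Suc J)" using digit_seqD[OF c'] by (simp add: E_def)
  have "DeltaQ p c = DeltaQ p (maxima_after m c' (Suc J) E)"
  proof (rule DeltaQ_cong)
    fix l :: nat assume "l \<ge> 1"
    then show "c l = maxima_after m c' (Suc J) E l"
      using agree[of l] E tail_value_eq_1_imp_max_digits[OF c one, of l]
      by (auto simp: maxima_after_def not_less_eq)
  qed
  also have "\<dots> = DeltaQ p (zeros_after c' (Suc J) E)"
    using DeltaQ_zeros_after_eq_maxima_after[OF p c', of "Suc J" E] E E_le by simp
  also have "\<dots> = DeltaQ p c'"
  proof (rule DeltaQ_cong)
    fix l :: nat assume "l \<ge> 1"
    then show "zeros_after c' (Suc J) E l = c' l"
      using tail_value_eq_0_imp_zero_digits[OF c' zero, of l]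
      by (auto simp: zeros_after_def E_def not_less_eq)
  qed
  finally show ?thesis .
qed

text \<open>Two \<open>Q\<close>-expansions of the same point differ at most by the two expansions of a
  rational point, and these have the same \<open>P\<close>-value.\<close>
lemma DeltaQ_eq_transfer:
  assumes p: "expansion_matrix m p" and c: "digit_seq m c" and c': "digit_seq m c'"
    and eq: "DeltaQ q c = DeltaQ q c'"
  shows "DeltaQ p c = DeltaQ p c'"
proof (cases "\<forall>k\<ge>1. c k = c' k")
  case True
  then show ?thesis by (intro DeltaQ_cong) auto
next
  case False
  define j where "j = (LEAST k. k \<ge> 1 \<and> c k \<noteq> c' k)"
  have j: "j \<ge> 1" "c j \<noteq> c' j" using False LeastI_ex[of "\<lambda>k. k \<ge> 1 \<and> c k \<noteq> c' k"]
    unfolding j_def by auto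
  obtain J where jJ: "j = Suc J" using j(1) not0_implies_Suc by fastforce
  have agree: "\<And>l. 1 \<le> l \<Longrightarrow> l \<le> J \<Longrightarrow> c l = c' l"
    using not_less_Least[of _ "\<lambda>k. k \<ge> 1 \<and> c k \<noteq> c' k"] unfolding j_def[symmetric] jJ
    by (metis le_imp_less_Suc)
  show ?thesis
  proof (cases "c (Suc J) < c' (Suc J)")
    case True
    then show ?thesis using DeltaQ_transfer_at_first_difference[OF p c c' eq, of J] agree by blast
  next
    case False
    then have "c' (Suc J) < c (Suc J)" using j jJ by simp
    then show ?thesis
      using DeltaQ_transfer_at_first_difference[OF p c' c eq[symmetric], of J] agree by (metis)
  qed
qed

end

section \<open>The function \<open>F\<close> and nega-rational points\<close>

lemma digit_seq_nega_digits: "digit_seq m d \<Longrightarrow> digit_seq m (nega_digits m d)"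
  unfolding digit_seq_def nega_digits_def by auto

lemma nega_digits_nega_digits:
  "digit_seq m c \<Longrightarrow> k \<ge> 1 \<Longrightarrow> nega_digits m (nega_digits m c) k = c k"
  unfolding digit_seq_def nega_digits_def by auto

lemma F_series_eq_DeltaQ: "F_series m p d = DeltaQ p (nega_digits m d)"
proof -
  have "tilde_beta m p (d k) k = aQ p (nega_digits m d k) k" for k
    unfolding tilde_beta_def nega_digits_def betaP_def aQ_def by auto
  moreover have "tilde_p m p (d k) k = p (nega_digits m d k) k" for k
    unfolding tilde_p_def nega_digits_def by auto
  ultimately show ?thesis unfolding F_series_def DeltaQ_def by presburger
qed

lemma (in positive_expansion) FF_DeltaQ:
  assumes p: "expansion_matrix m p" and c: "digit_seq m c"
  shows "FF m q p (DeltaQ q c) = DeltaQ p c"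
proof -
  define P where "P d \<longleftrightarrow> digit_seq m d \<and> nega_DeltaQ m q d = DeltaQ q c" for d
  have "P (nega_digits m c)"
    unfolding P_def nega_DeltaQ_def using digit_seq_nega_digits[OF c] nega_digits_nega_digits[OF c]
    by (auto intro: DeltaQ_cong)
  then have d: "P (SOME d. P d)" by (rule someI[of P])
  have "FF m q p (DeltaQ q c) = DeltaQ p (nega_digits m (SOME d. P d))"
    unfolding FF_def P_def F_series_eq_DeltaQ ..
  also have "\<dots> = DeltaQ p c"
    using DeltaQ_eq_transfer[OF p digit_seq_nega_digits c] d unfolding P_def nega_DeltaQ_def by blast
  finally show ?thesis .
qed

lemma nega_rational_point_expansions:
  assumes q: "expansion_matrix m q" and x: "x \<in> nega_rational_points m q"
  obtains N E c where "N \<ge> 1" "1 \<le> E" "E \<le> m N" "digit_seq m c"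
    "x = DeltaQ q (zeros_after c N E)"
proof -
  obtain d n where n: "n \<ge> 1" and d: "digit_seq m d" and dn: "d n \<noteq> 0"
    and tail: "\<And>k. k > n \<Longrightarrow> d k = (if odd (k - n) then m k else 0)" and xd: "x = nega_DeltaQ m q d"
    using x unfolding nega_rational_points_def by blast
  define c where "c = nega_digits m d"
  have c: "digit_seq m c" unfolding c_def by (rule digit_seq_nega_digits[OF d])
  have x_c: "x = DeltaQ q c" unfolding xd nega_DeltaQ_def c_def ..
  have dn_le: "d n \<le> m n" using digit_seqD[OF d n] .
  show ?thesis
  proof (cases "odd n")
    case True
    have "x = DeltaQ q (zeros_after c n (d n))"
      unfolding x_c using tail True
      by (intro DeltaQ_cong) (auto simp: c_def zeros_after_def nega_digits_def)
    then show ?thesis using that[OF n _ dn_le c] dn by simp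
  next
    case False
    define E where "E = Suc (c n)"
    have E: "1 \<le> E" "E \<le> m n" using dn dn_le False by (auto simp: E_def c_def nega_digits_def)
    have "x = DeltaQ q (maxima_after m c n E)"
      unfolding x_c using tail False
      by (intro DeltaQ_cong) (auto simp: c_def E_def maxima_after_def nega_digits_def)
    then show ?thesis using that[OF n E c] DeltaQ_zeros_after_eq_maxima_after[OF q c n E] by simp
  qed
qed

section \<open>Difference quotients at nega-rational points\<close>

lemma no_derivative_if_quotient_limits_differ:
  fixes f :: "real \<Rightarrow> real"
  assumes y: "\<And>k. y k \<in> S - {x}" "y \<longlonglongrightarrow> x" and z: "\<And>k. z k \<in> S - {x}" "z \<longlonglongrightarrow> x"
    and R: "(\<lambda>k. (f (y k) - f x) / (y k - x)) \<longlonglongrightarrow> R"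
    and L: "(\<lambda>k. (f (z k) - f x) / (z k - x)) \<longlonglongrightarrow> L" and "R \<noteq> L"
  shows "\<not> (\<exists>D. (f has_real_derivative D) (at x within S)) \<and> \<not> has_infinite_derivative f x S"
proof -
  define g where "g t = (f t - f x) / (t - x)" for t
  have y_at: "filterlim y (at x within S) sequentially" and z_at: "filterlim z (at x within S) sequentially"
    using y z by (auto simp: filterlim_at)
  have "\<not> (g \<longlongrightarrow> D) (at x within S)" for D
  proof
    assume "(g \<longlongrightarrow> D) (at x within S)"
    then have "(\<lambda>k. g (y k)) \<longlonglongrightarrow> D" "(\<lambda>k. g (z k)) \<longlonglongrightarrow> D"
      using filterlim_compose y_at z_at by blast+
    then show False using R L \<open>R \<noteq> L\<close> LIMSEQ_unique unfolding g_def by blast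
  qed
  moreover have "\<not> filterlim g at_infinity (at x within S)"
  proof
    assume "filterlim g at_infinity (at x within S)"
    then have "filterlim (\<lambda>k. g (y k)) at_infinity sequentially" using filterlim_compose y_at by blast
    then show False using not_tendsto_and_filterlim_at_infinity[OF trivial_limit_sequentially R]
      unfolding g_def by blast
  qed
  ultimately show ?thesis
    unfolding has_field_derivative_iff has_infinite_derivative_def g_def[symmetric]
    using filterlim_mono[OF _ at_top_le_at_infinity order_refl]
      filterlim_mono[OF _ at_bot_le_at_infinity order_refl] by blast
qed

lemma digit_prod_tail_tendsto:
  assumes tail: "\<And>l. l > N \<Longrightarrow> e l = c l"
    and lim: "(\<lambda>K. digit_prod f c 0 K) \<longlonglongrightarrow> L" and nz: "digit_prod f c 0 N \<noteq> 0"
  shows "(\<lambda>k. digit_prod f e 0 (N+k)) \<longlonglongrightarrow> digit_prod f e 0 N / digit_prod f c 0 N * L"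
proof -
  have "digit_prod f e 0 (N+k) = digit_prod f e 0 N / digit_prod f c 0 N * digit_prod f c 0 (N+k)" for k
    using digit_prod_split[of 0 N "N+k" f e] digit_prod_split[of 0 N "N+k" f c]
      digit_prod_cong[of N "N+k" e c f] tail nz by simp
  moreover have "(\<lambda>k. digit_prod f c 0 (N+k)) \<longlonglongrightarrow> L"
    using LIMSEQ_ignore_initial_segment[OF lim, of N] by (simp add: add.commute)
  ultimately show ?thesis
    using tendsto_mult_left[of _ L sequentially "digit_prod f e 0 N / digit_prod f c 0 N"] by simp
qed

lemma digit_prod_tail_tendsto_same_sign:
  assumes tail: "\<And>l. l > N \<Longrightarrow> e l = d l" and pos: "\<And>l. l \<ge> 1 \<Longrightarrow> f (d l) l > 0"
    and lim: "(\<lambda>K. digit_prod f d 0 K) \<longlonglongrightarrow> L" and "L \<noteq> 0"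
  obtains R where "(\<lambda>k. digit_prod f e 0 (N+k)) \<longlonglongrightarrow> R" "sgn R = sgn (digit_prod f e 0 N)"
proof
  have "0 \<le> L" by (rule LIMSEQ_le_const[OF lim]) (use digit_prod_pos[of f d, OF pos] in \<open>auto intro: less_imp_le\<close>)
  then have "L > 0" using \<open>L \<noteq> 0\<close> by simp
  moreover have "digit_prod f d 0 N > 0" by (rule digit_prod_pos[of f d, OF pos])
  ultimately show "sgn (digit_prod f e 0 N / digit_prod f d 0 N * L) = sgn (digit_prod f e 0 N)"
    by (simp add: sgn_mult)
  show "(\<lambda>k. digit_prod f e 0 (N+k)) \<longlonglongrightarrow> digit_prod f e 0 N / digit_prod f d 0 N * L"
    using digit_prod_tail_tendsto[OF tail lim] digit_prod_pos[of f d, OF pos] by (simp add: less_le)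
qed

context positive_expansion
begin

lemma quotient_limit_from_right:
  assumes p: "expansion_matrix m p" and e: "digit_seq m e" and zeros: "\<And>l. l > N \<Longrightarrow> e l = 0"
    and p0: "\<And>k. k \<ge> 1 \<Longrightarrow> p 0 k > 0"
    and L0: "(\<lambda>K. \<Prod>k=1..K. p 0 k / q 0 k) \<longlonglongrightarrow> L0" "L0 \<noteq> 0"
  obtains y R where "\<And>k. y k \<in> {0..1} - {DeltaQ q e}" "y \<longlonglongrightarrow> DeltaQ q e"
    "(\<lambda>k. (FF m q p (y k) - FF m q p (DeltaQ q e)) / (y k - DeltaQ q e)) \<longlonglongrightarrow> R"
    "sgn R = sgn (digit_prod (\<lambda>i n. p i n / q i n) e 0 N)"
proof -
  define ey where "ey k = (\<lambda>j. if j \<le> N+k then e j else m j)" for k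
  define y where "y k = DeltaQ q (ey k)" for k
  have ey: "digit_seq m (ey k)" for k using e unfolding ey_def digit_seq_def by auto
  have dq: "y k - DeltaQ q e = digit_prod q e 0 (N+k)" for k
    unfolding y_def ey_def by (rule DeltaQ_raise_zero_tail[OF expansion e]) (simp add: zeros)
  have dp: "FF m q p (y k) - FF m q p (DeltaQ q e) = digit_prod p e 0 (N+k)" for k
    unfolding y_def FF_DeltaQ[OF p ey] FF_DeltaQ[OF p e] unfolding ey_def
    by (rule DeltaQ_raise_zero_tail[OF p e]) (simp add: zeros)
  have quotient: "(FF m q p (y k) - FF m q p (DeltaQ q e)) / (y k - DeltaQ q e)
      = digit_prod (\<lambda>i n. p i n / q i n) e 0 (N+k)" for k
    unfolding dp dq digit_prod_divide ..
  obtain R where R: "(\<lambda>k. digit_prod (\<lambda>i n. p i n / q i n) e 0 (N+k)) \<longlonglongrightarrow> R"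
    "sgn R = sgn (digit_prod (\<lambda>i n. p i n / q i n) e 0 N)"
    by (rule digit_prod_tail_tendsto_same_sign[of N e "\<lambda>_. 0"])
      (use zeros p0 pos L0 in \<open>simp_all add: digit_prod_from_0\<close>)
  have range: "y k \<in> {0..1} - {DeltaQ q e}" for k
    using DeltaQ_bounds[OF expansion ey[of k]] dq[of k] digit_prod_q_pos[OF e, of 0 "N+k"]
    unfolding y_def by auto
  have conv: "y \<longlonglongrightarrow> DeltaQ q e"
  proof -
    have "(\<lambda>k. DeltaQ q e + digit_prod q e 0 (k+N)) \<longlonglongrightarrow> DeltaQ q e + 0"
      using LIMSEQ_ignore_initial_segment[OF expansion_matrixD(5)[OF expansion e], of N]
      by (intro tendsto_add tendsto_const)
    moreover have "y = (\<lambda>k. DeltaQ q e + digit_prod q e 0 (k+N))"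
    proof
      fix k show "y k = DeltaQ q e + digit_prod q e 0 (k+N)"
        using dq[of k] by (simp only: add.commute[of k N])
    qed
    ultimately show ?thesis by simp
  qed
  show ?thesis using that[OF range conv _ R(2)] R(1) by (simp add: quotient)
qed

lemma quotient_limit_from_left:
  assumes p: "expansion_matrix m p" and e: "digit_seq m e" and max: "\<And>l. l > N \<Longrightarrow> e l = m l"
    and pm: "\<And>k. k \<ge> 1 \<Longrightarrow> p (m k) k > 0"
    and Lm: "(\<lambda>K. \<Prod>k=1..K. p (m k) k / q (m k) k) \<longlonglongrightarrow> Lm" "Lm \<noteq> 0"
  obtains z L where "\<And>k. z k \<in> {0..1} - {DeltaQ q e}" "z \<longlonglongrightarrow> DeltaQ q e"
    "(\<lambda>k. (FF m q p (z k) - FF m q p (DeltaQ q e)) / (z k - DeltaQ q e)) \<longlonglongrightarrow> L"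
    "sgn L = sgn (digit_prod (\<lambda>i n. p i n / q i n) e 0 N)"
proof -
  define ez where "ez k = (\<lambda>j. if j \<le> N+k then e j else 0)" for k
  define z where "z k = DeltaQ q (ez k)" for k
  have ez: "digit_seq m (ez k)" for k using e unfolding ez_def digit_seq_def by auto
  have dq: "DeltaQ q e - z k = digit_prod q e 0 (N+k)" for k
    unfolding z_def ez_def by (rule DeltaQ_lower_max_tail[OF expansion e]) (simp add: max)
  have dp: "FF m q p (DeltaQ q e) - FF m q p (z k) = digit_prod p e 0 (N+k)" for k
    unfolding z_def FF_DeltaQ[OF p ez] FF_DeltaQ[OF p e] unfolding ez_def
    by (rule DeltaQ_lower_max_tail[OF p e]) (simp add: max)
  have quotient: "(FF m q p (z k) - FF m q p (DeltaQ q e)) / (z k - DeltaQ q e)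
      = digit_prod (\<lambda>i n. p i n / q i n) e 0 (N+k)" for k
  proof -
    have "FF m q p (z k) - FF m q p (DeltaQ q e) = - digit_prod p e 0 (N+k)"
      "z k - DeltaQ q e = - digit_prod q e 0 (N+k)"
      using dp[of k] dq[of k] by linarith+
    then show ?thesis by (simp add: digit_prod_divide)
  qed
  obtain L where L: "(\<lambda>k. digit_prod (\<lambda>i n. p i n / q i n) e 0 (N+k)) \<longlonglongrightarrow> L"
    "sgn L = sgn (digit_prod (\<lambda>i n. p i n / q i n) e 0 N)"
    by (rule digit_prod_tail_tendsto_same_sign[of N e m])
      (use max pm pos Lm in \<open>simp_all add: digit_prod_from_0\<close>)
  have range: "z k \<in> {0..1} - {DeltaQ q e}" for k
    using DeltaQ_bounds[OF expansion ez[of k]] dq[of k] digit_prod_q_pos[OF e, of 0 "N+k"]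
    unfolding z_def by auto
  have conv: "z \<longlonglongrightarrow> DeltaQ q e"
  proof -
    have "(\<lambda>k. DeltaQ q e - digit_prod q e 0 (k+N)) \<longlonglongrightarrow> DeltaQ q e - 0"
      using LIMSEQ_ignore_initial_segment[OF expansion_matrixD(5)[OF expansion e], of N]
      by (intro tendsto_diff tendsto_const)
    moreover have "z = (\<lambda>k. DeltaQ q e - digit_prod q e 0 (k+N))"
    proof
      fix k show "z k = DeltaQ q e - digit_prod q e 0 (k+N)"
        using dq[of k] by (simp only: add.commute[of k N])
    qed
    ultimately show ?thesis by simp
  qed
  show ?thesis using that[OF range conv _ L(2)] L(1) by (simp add: quotient)
qed

end

lemma (in positive_expansion) no_derivative_at_rational_point:
  assumes p: "expansion_matrix m p" and c: "digit_seq m c" and N: "N \<ge> 1" and E: "1 \<le> E" "E \<le> m N"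
    and sign_change: "p E N * p (E - 1) N < 0"
    and p0: "\<And>k. k \<ge> 1 \<Longrightarrow> p 0 k > 0" and pm: "\<And>k. k \<ge> 1 \<Longrightarrow> p (m k) k > 0"
    and L0: "(\<lambda>K. \<Prod>k=1..K. p 0 k / q 0 k) \<longlonglongrightarrow> L0" "L0 \<noteq> 0"
    and Lm: "(\<lambda>K. \<Prod>k=1..K. p (m k) k / q (m k) k) \<longlonglongrightarrow> Lm" "Lm \<noteq> 0"
  shows "\<not> (\<exists>D. (FF m q p has_real_derivative D) (at (DeltaQ q (zeros_after c N E)) within {0..1}))
    \<and> \<not> has_infinite_derivative (FF m q p) (DeltaQ q (zeros_after c N E)) {0..1}"
proof -
  define e where "e = zeros_after c N E"
  define e' where "e' = maxima_after m c N E"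
  define r where "r = (\<lambda>i n. p i n / q i n)"
  obtain J where NJ: "N = Suc J" using N not0_implies_Suc by fastforce
  have e: "digit_seq m e" and e': "digit_seq m e'"
    unfolding e_def e'_def using digit_seq_zeros_after digit_seq_maxima_after c E by auto
  have zeros: "\<And>l. l > N \<Longrightarrow> e l = 0" and maxima: "\<And>l. l > N \<Longrightarrow> e' l = m l"
    by (simp_all add: e_def e'_def zeros_after_def maxima_after_def)
  have same_point: "DeltaQ q e' = DeltaQ q e"
    unfolding e_def e'_def using DeltaQ_zeros_after_eq_maxima_after[OF expansion c N E] by simp
  obtain y R where y: "\<And>k. y k \<in> {0..1} - {DeltaQ q e}" "y \<longlonglongrightarrow> DeltaQ q e"
    and R: "(\<lambda>k. (FF m q p (y k) - FF m q p (DeltaQ q e)) / (y k - DeltaQ q e)) \<longlonglongrightarrow> R"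
      "sgn R = sgn (digit_prod r e 0 N)"
    using quotient_limit_from_right[OF p e zeros p0 L0] unfolding r_def by blast
  obtain z L where z: "\<And>k. z k \<in> {0..1} - {DeltaQ q e}" "z \<longlonglongrightarrow> DeltaQ q e"
    and L: "(\<lambda>k. (FF m q p (z k) - FF m q p (DeltaQ q e)) / (z k - DeltaQ q e)) \<longlonglongrightarrow> L"
      "sgn L = sgn (digit_prod r e' 0 N)"
    using quotient_limit_from_left[OF p e' maxima pm Lm] unfolding r_def same_point by blast
  have "digit_prod r e 0 J \<noteq> 0"
    by (rule digit_prod_nonzero) (use expansion_matrixD(4)[OF p] pos digit_seqD[OF e] in
        \<open>fastforce simp: r_def\<close>)
  moreover have "r E N * r (E - 1) N < 0"
    using sign_change pos[OF N, of E] pos[OF N, of "E - 1"] E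
    by (simp add: r_def mult_neg_pos divide_neg_pos)
  moreover have "digit_prod r e 0 N * digit_prod r e' 0 N = (digit_prod r e 0 J)\<^sup>2 * (r E N * r (E - 1) N)"
    using digit_prod_mult_common_prefix[of J e e' r]
    by (simp add: NJ e_def e'_def zeros_after_def maxima_after_def)
  ultimately have "digit_prod r e 0 N * digit_prod r e' 0 N < 0"
    by (simp add: mult_pos_neg)
  then have "R \<noteq> L" using R(2) L(2) by (auto simp: sgn_if mult_less_0_iff split: if_splits)
  then show ?thesis
    using no_derivative_if_quotient_limits_differ[OF y z R(1) L(1)] unfolding e_def by blast
qed

theorem mainTheorem11:
  fixes m :: "nat \<Rightarrow> nat" and q p :: "nat \<Rightarrow> nat \<Rightarrow> real"
  assumes q_pos: "\<And>n i. n \<ge> 1 \<Longrightarrow> i \<le> m n \<Longrightarrow> q i n > 0"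
    and q_sum: "\<And>n. n \<ge> 1 \<Longrightarrow> (\<Sum>i\<le>m n. q i n) = 1"
    and q_prod: "\<And>d. digit_seq m d \<Longrightarrow> (\<lambda>n. \<Prod>k=1..n. q (d k) k) \<longlonglongrightarrow> 0"
    and p_range: "\<And>n i. n \<ge> 1 \<Longrightarrow> i \<le> m n \<Longrightarrow> -1 < p i n \<and> p i n < 1"
    and p_sum: "\<And>n. n \<ge> 1 \<Longrightarrow> (\<Sum>i\<le>m n. p i n) = 1"
    and p_prod: "\<And>d. digit_seq m d \<Longrightarrow> (\<lambda>n. \<Prod>k=1..n. \<bar>p (d k) k\<bar>) \<longlonglongrightarrow> 0"
    and p_partial: "\<And>n c. n \<ge> 1 \<Longrightarrow> 1 \<le> c \<Longrightarrow> c \<le> m n \<Longrightarrow>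
                      0 < (\<Sum>i<c. p i n) \<and> (\<Sum>i<c. p i n) < 1"
    and cond_i: "\<And>n c. n \<ge> 1 \<Longrightarrow> 1 \<le> c \<Longrightarrow> c \<le> m n \<Longrightarrow> p c n * p (c - 1) n < 0"
    and cond_ii0: "\<exists>L. L \<noteq> 0 \<and> (\<lambda>n. \<Prod>k=1..n. p 0 k / q 0 k) \<longlonglongrightarrow> L"
    and cond_iim: "\<exists>L. L \<noteq> 0 \<and> (\<lambda>n. \<Prod>k=1..n. p (m k) k / q (m k) k) \<longlonglongrightarrow> L"
    and x: "x \<in> nega_rational_points m q"
  shows "\<not> (\<exists>D. (FF m q p has_real_derivative D) (at x within {0..1}))
         \<and> \<not> has_infinite_derivative (FF m q p) x {0..1}"
proof -
  have q: "expansion_matrix m q" by (rule expansion_matrix_positive[OF q_pos q_sum q_prod])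
  interpret positive_expansion m q by unfold_locales (use q q_pos in auto)
  have p0: "p 0 n > 0" and pm: "p (m n) n > 0" if "n \<ge> 1" for n
    using first_and_last_pos[OF p_sum p_partial] that by auto
  have p_partial_aQ: "0 \<le> aQ p c n \<and> aQ p c n \<le> 1" if "n \<ge> 1" "1 \<le> c" "c \<le> m n" for n c
    using p_partial[OF that] by (simp add: aQ_def)
  have p_nonzero: "p i n \<noteq> 0" if "n \<ge> 1" "i \<le> m n" for n i
    using p0[of n] cond_i[of n i] that by (cases i) auto
  have p: "expansion_matrix m p"
    by (rule expansion_matrixI[OF p_sum p_partial_aQ p_nonzero p_prod])
  obtain N E c where N: "N \<ge> 1" and E: "1 \<le> E" "E \<le> m N" and c: "digit_seq m c"
    and x_eq: "x = DeltaQ q (zeros_after c N E)"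
    by (rule nega_rational_point_expansions[OF q x])
  obtain L0 where L0: "(\<lambda>K. \<Prod>k=1..K. p 0 k / q 0 k) \<longlonglongrightarrow> L0" "L0 \<noteq> 0"
    using cond_ii0 by blast
  obtain Lm where Lm: "(\<lambda>K. \<Prod>k=1..K. p (m k) k / q (m k) k) \<longlonglongrightarrow> Lm" "Lm \<noteq> 0"
    using cond_iim by blast
  show ?thesis unfolding x_eq
    by (rule no_derivative_at_rational_point[OF p c N E cond_i[OF N E] _ _ L0 Lm]) (use p0 pm in auto)
qed

end
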